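(* Let $Z$ be a topological space, $S\colon Z\to Z$ continuous, $X\subset Z$ a Borel subset with $S(X)\subset X$, equipped with the induced topology, and $T=S|_X$. Let $\mu$ be a finite $S$-invariant Borel measure on $Z$, and let $\mathcal Z=\{Z_0,\dots,Z_k\}$ be a measurable partition of $Z$ such that $Z_1,\dots,Z_k\subset X$. Then $\mu$ (restricted to $X$) is $T$-invariant and $$h_\mu(\mathcal Z,S)\le h_\mu(\mathcal C,T),\qquad\text{where } \mathcal C=X\cap\mathcal Z=\{X\cap Z_j: 0\le j\le k\}.$$
   Context: For a map $R$ on a space $Y$ and a finite measurable partition $\mathcal P$, $\mathcal P\vee\mathcal Q=\{P\cap Q:P\in\mathcal P,Q\in\mathcal Q,P\cap Q\ne\emptyset\}$ and $\mathcal P^n_R=\mathcal P\vee R^{-1}(\mathcal P)\vee\dots\vee R^{-(n-1)}(\mathcal P)$. For a finite measure $\mu$, $H_\mu(\mathcal P)=\sum_{P\in\mathcal P}\mu(P)\log\frac1{\mu(P)}$ (with $0\log\frac10=0$), and for $R$-invariant $\mu$, $h_\mu(\mathcal P,R)=\lim_n\frac1nH_\mu(\mathcal P^n_R)$. *)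

theory Defs
  imports "HOL-Analysis.Analysis"
begin

definition pjoin :: "'a set set \<Rightarrow> 'a set set \<Rightarrow> 'a set set" where
  "pjoin P Q = {p \<inter> q | p q. p \<in> P \<and> q \<in> Q \<and> p \<inter> q \<noteq> {}}"

definition ppre :: "'a measure \<Rightarrow> ('a \<Rightarrow> 'a) \<Rightarrow> 'a set set \<Rightarrow> 'a set set" where
  "ppre N R P = {R -` p \<inter> space N | p. p \<in> P}"

fun dyn_join :: "'a measure \<Rightarrow> ('a \<Rightarrow> 'a) \<Rightarrow> 'a set set \<Rightarrow> nat \<Rightarrow> 'a set set" where
  "dyn_join N R P 0 = {space N}"
| "dyn_join N R P (Suc n) = pjoin (dyn_join N R P n) (ppre N (R ^^ n) P)"

text \<open>Entropy H_mu(P) = sum mu(P) log(1/mu(P)) (natural log; 0 log(1/0) = 0 automatically).\<close>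
definition part_entropy :: "'a measure \<Rightarrow> 'a set set \<Rightarrow> real" where
  "part_entropy N P = (\<Sum>p\<in>P. measure N p * ln (1 / measure N p))"

definition ks_entropy :: "'a measure \<Rightarrow> ('a \<Rightarrow> 'a) \<Rightarrow> 'a set set \<Rightarrow> real" where
  "ks_entropy N R P = lim (\<lambda>n. part_entropy N (dyn_join N R P n) / real n)"

definition invariant_measure :: "'a measure \<Rightarrow> ('a \<Rightarrow> 'a) \<Rightarrow> bool" where
  "invariant_measure N R \<longleftrightarrow> R \<in> N \<rightarrow>\<^sub>M N \<and>
     (\<forall>A\<in>sets N. emeasure N (R -` A \<inter> space N) = emeasure N A)"

end

theory Submission
  imports Defs
begin

text \<open>
  Let \<open>E\<close> be the set of points whose \<open>S\<close>-orbit never enters \<open>X\<close>. By invariance and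
  \<open>S(X) \<subseteq> X\<close> the sets \<open>S\<^sup>-\<^sup>i(X) - X\<close> are null, so for a cell \<open>a\<close> of \<open>\<Z>\<^sup>n\<close> the part
  \<open>a - X\<close> is null unless \<open>a\<close> meets \<open>E\<close>. Since \<open>E\<close> lies in every \<open>S\<^sup>-\<^sup>i(Z\<^sub>0)\<close>, each cell either
  misses \<open>E\<close> or contains it, so at most one cell has \<open>\<mu>(a - X) > 0\<close>. As the traces \<open>X \<inter> a\<close>
  are the cells of \<open>\<C>\<^sup>n\<close>, subadditivity of \<open>t log(1/t)\<close> applied to
  \<open>\<mu>(a) = \<mu>(X \<inter> a) + \<mu>(a - X)\<close> gives \<open>H(\<Z>\<^sup>n) \<le> H(\<C>\<^sup>n) + 1\<close>, and dividing by \<open>n\<close>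
  yields the inequality of entropies. Since \<open>ks_entropy\<close> is defined via \<open>lim\<close>, both limits
  must be shown to exist; this is Fekete's lemma for the sequence \<open>H(\<Z>\<^sup>n)\<close>, which is
  subadditive up to the constant \<open>\<mu>(Z) log \<mu>(Z)\<close>.
\<close>

definition entropy_term :: "real \<Rightarrow> real" where
  "entropy_term t = t * ln (1 / t)"

lemma part_entropy_eq_sum_entropy_term:
  "part_entropy N P = (\<Sum>p\<in>P. entropy_term (measure N p))"
  unfolding part_entropy_def entropy_term_def ..

lemma entropy_term_le_one:
  assumes "0 \<le> t"
  shows "entropy_term t \<le> 1"
proof (cases "t = 0")
  case False
  then have t: "t > 0" using assms by auto
  have "entropy_term t \<le> t * (1 / t - 1)"
    unfolding entropy_term_def using t by (intro mult_left_mono ln_le_minus_one) auto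
  also have "\<dots> = 1 - t" using t by (simp add: field_simps)
  finally show ?thesis using t by simp
qed (simp add: entropy_term_def)

lemma entropy_term_add_le:
  fixes x y :: real
  assumes "0 \<le> x" "0 \<le> y"
  shows "entropy_term (x + y) \<le> entropy_term x + entropy_term y"
proof (cases "x = 0 \<or> y = 0")
  case False
  then have xy: "x > 0" "y > 0" using assms by auto
  have "ln (1 / (x + y)) \<le> ln (1 / x)" "ln (1 / (x + y)) \<le> ln (1 / y)"
    using xy by (simp_all add: ln_div)
  then have "x * ln (1 / (x + y)) + y * ln (1 / (x + y)) \<le> x * ln (1 / x) + y * ln (1 / y)"
    using xy by (intro add_mono mult_left_mono) auto
  then show ?thesis unfolding entropy_term_def by (simp add: distrib_right)
qed (auto simp: entropy_term_def)

lemma sum_entropy_term_le_one: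
  assumes A: "finite A" and nonneg: "\<And>a. a \<in> A \<Longrightarrow> 0 \<le> f a"
    and single: "\<And>a b. a \<in> A \<Longrightarrow> b \<in> A \<Longrightarrow> f a \<noteq> 0 \<Longrightarrow> f b \<noteq> 0 \<Longrightarrow> a = b"
  shows "(\<Sum>a\<in>A. entropy_term (f a)) \<le> 1"
proof (cases "\<exists>a\<in>A. f a \<noteq> 0")
  case True
  then obtain a where a: "a \<in> A" "f a \<noteq> 0" by blast
  have "(\<Sum>b\<in>A - {a}. entropy_term (f b)) = 0"
    using single[OF a(1) _ a(2)] by (intro sum.neutral) (auto simp: entropy_term_def)
  then have "(\<Sum>b\<in>A. entropy_term (f b)) = entropy_term (f a)"
    by (simp add: sum.remove[OF A a(1)])
  with a nonneg show ?thesis by (simp add: entropy_term_le_one)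
qed (simp add: entropy_term_def)

text \<open>This is \<open>ln x \<le> x - 1\<close> at \<open>x = r s / (c a)\<close>; summed over a joint distribution with
  marginals \<open>r\<close> and \<open>s\<close> it gives the subadditivity of entropy below.\<close>

lemma entropy_term_le_cross:
  fixes a r s c :: real
  assumes "0 \<le> a" "a \<le> r" "a \<le> s" "0 < c"
  shows "entropy_term a \<le> a * ln (1 / r) + a * ln (1 / s) + a * ln c + (r * s / c - a)"
proof (cases "a = 0")
  case False
  then have a: "a > 0" and rs: "r > 0" "s > 0" using assms by auto
  have "entropy_term a - (a * ln (1 / r) + a * ln (1 / s) + a * ln c) = a * ln (r * s / (c * a))"
    using a rs assms by (simp add: entropy_term_def ln_div ln_mult algebra_simps)
  also have "\<dots> \<le> a * (r * s / (c * a) - 1)"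
    using a rs assms by (intro mult_left_mono ln_le_minus_one) auto
  also have "\<dots> = r * s / c - a" using a assms by (simp add: field_simps)
  finally show ?thesis by simp
qed (use assms in \<open>simp add: entropy_term_def\<close>)

lemma entropy_term_joint_le:
  fixes a :: "'i \<Rightarrow> 'j \<Rightarrow> real"
  assumes I: "finite I" and J: "finite J"
    and nonneg: "\<And>i j. i \<in> I \<Longrightarrow> j \<in> J \<Longrightarrow> 0 \<le> a i j"
    and row: "\<And>i. i \<in> I \<Longrightarrow> (\<Sum>j\<in>J. a i j) = r i"
    and col: "\<And>j. j \<in> J \<Longrightarrow> (\<Sum>i\<in>I. a i j) = s j"
    and total: "(\<Sum>i\<in>I. r i) = c"
  shows "(\<Sum>i\<in>I. \<Sum>j\<in>J. entropy_term (a i j))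
           \<le> (\<Sum>i\<in>I. entropy_term (r i)) + (\<Sum>j\<in>J. entropy_term (s j)) + c * ln c"
proof (cases "c = 0")
  case True
  have r0: "r i = 0" if "i \<in> I" for i
    using sum_nonneg_eq_0_iff[OF I, of r] row nonneg total True that by (metis sum_nonneg)
  then have a0: "a i j = 0" if "i \<in> I" "j \<in> J" for i j
    using sum_nonneg_eq_0_iff[OF J] row[of i] nonneg that by auto
  then have "s j = 0" if "j \<in> J" for j using col[of j] that by simp
  with a0 r0 True show ?thesis by (simp add: entropy_term_def)
next
  case False
  have "0 \<le> c" using total row nonneg by (metis sum_nonneg)
  with False have c: "c > 0" by simp
  have "a i j \<le> r i" if "i \<in> I" "j \<in> J" for i j
    using row[of i] member_le_sum[of j J "a i"] nonneg that J by auto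
  moreover have "a i j \<le> s j" if "i \<in> I" "j \<in> J" for i j
    using col[of j] member_le_sum[of i I "\<lambda>i. a i j"] nonneg that I by auto
  ultimately have "(\<Sum>i\<in>I. \<Sum>j\<in>J. entropy_term (a i j)) \<le> (\<Sum>i\<in>I. \<Sum>j\<in>J.
       a i j * ln (1 / r i) + a i j * ln (1 / s j) + a i j * ln c + (r i * s j / c - a i j))"
    by (intro sum_mono entropy_term_le_cross nonneg c)
  also have "\<dots> = (\<Sum>i\<in>I. (\<Sum>j\<in>J. a i j) * ln (1 / r i)) + (\<Sum>j\<in>J. (\<Sum>i\<in>I. a i j) * ln (1 / s j))
       + (\<Sum>i\<in>I. \<Sum>j\<in>J. a i j) * ln c
       + ((\<Sum>i\<in>I. r i) * (\<Sum>j\<in>J. s j) / c - (\<Sum>i\<in>I. \<Sum>j\<in>J. a i j))"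
    by (simp add: sum.distrib sum_subtractf sum_distrib_left sum_distrib_right
        sum_divide_distrib sum.swap[of _ J I] algebra_simps)
  also have "(\<Sum>i\<in>I. \<Sum>j\<in>J. a i j) = c" using row total by simp
  also have "(\<Sum>j\<in>J. s j) = c" using col total row sum.swap[of a J I] by simp
  finally show ?thesis using row col total by (simp add: entropy_term_def)
qed

section \<open>Fekete's lemma\<close>

lemma subadditive_le_mult:
  fixes b :: "nat \<Rightarrow> real"
  assumes sub: "\<And>n m. b (n + m) \<le> b n + b m"
  shows "b (q * m + r) \<le> real q * b m + b r"
proof (induction q)
  case (Suc q)
  have "b (Suc q * m + r) \<le> b m + b (q * m + r)"
    using sub[of m "q * m + r"] by (simp add: algebra_simps)
  with Suc show ?case by (simp add: algebra_simps)
qed simp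

lemma subadditive_le_linear:
  fixes b :: "nat \<Rightarrow> real"
  assumes sub: "\<And>n m. b (n + m) \<le> b n + b m" and m: "m > 0"
  obtains B where "\<And>n. b n \<le> real n * (b m / real m) + B"
proof
  define B where "B = (\<Sum>r<m. \<bar>b r - real r * (b m / real m)\<bar>)"
  fix n
  define q r where "q = n div m" and "r = n mod m"
  have n: "n = q * m + r" and "r < m" using m unfolding q_def r_def by simp_all
  have "b n \<le> real q * b m + b r" using subadditive_le_mult[OF sub] n by simp
  also have "real q * b m = (real n - real r) * (b m / real m)"
    using m n by (simp add: field_simps)
  also have "b r \<le> real r * (b m / real m) + B"
    using member_le_sum[of r "{..<m}" "\<lambda>r. \<bar>b r - real r * (b m / real m)\<bar>"] \<open>r < m\<close>
    unfolding B_def by auto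
  finally show "b n \<le> real n * (b m / real m) + B"
    using left_diff_distrib[of "real n" "real r" "b m / real m"] by linarith
qed

lemma fekete_convergent:
  fixes b :: "nat \<Rightarrow> real"
  assumes sub: "\<And>n m. b (n + m) \<le> b n + b m" and lower: "\<And>n. K \<le> b n"
  shows "convergent (\<lambda>n. b n / real n)"
proof -
  define S where "S = (\<lambda>n. b n / real n) ` {1..}"
  have "min K 0 \<le> b n / real n" if "n \<ge> 1" for n
  proof -
    have "min K 0 * real n \<le> K" using that mult_left_mono_neg[of 1 "real n" K] by (cases "K \<le> 0") auto
    then show ?thesis using lower[of n] that by (simp add: field_simps)
  qed
  then have bdd: "bdd_below S" unfolding S_def by (intro bdd_belowI[of _ "min K 0"]) auto
  define L where "L = Inf S"
  have "(\<lambda>n. b n / real n) \<longlonglongrightarrow> L"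
  proof (rule order_tendstoI)
    fix y assume "L < y"
    then obtain m where m: "m \<ge> 1" "b m / real m < y"
      using cInf_lessD[of S y] unfolding L_def S_def by auto
    obtain B where B: "\<And>n. b n \<le> real n * (b m / real m) + B"
      using subadditive_le_linear[OF sub, of m] m(1) by auto
    have "(\<lambda>n. b m / real m + B / real n) \<longlonglongrightarrow> b m / real m"
      using tendsto_add[OF tendsto_const lim_const_over_n] by simp
    then have "eventually (\<lambda>n. b m / real m + B / real n < y) sequentially"
      using m(2) by (rule order_tendstoD(2))
    then show "eventually (\<lambda>n. b n / real n < y) sequentially"
      using eventually_ge_at_top[of 1]
    proof eventually_elim
      case (elim n)
      have "b n / real n \<le> b m / real m + B / real n"
        using B[of n] elim(2) by (simp add: field_simps)
      with elim(1) show ?case by simp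
    qed
  next
    fix y assume "y < L"
    show "eventually (\<lambda>n. y < b n / real n) sequentially"
      using eventually_ge_at_top[of 1]
    proof eventually_elim
      case (elim n)
      have "L \<le> b n / real n" unfolding L_def S_def using bdd elim
        by (intro cInf_lower) (auto simp: S_def)
      with \<open>y < L\<close> show ?case by simp
    qed
  qed
  then show ?thesis unfolding convergent_def by blast
qed

definition finite_partition :: "'a measure \<Rightarrow> 'a set set \<Rightarrow> bool" where
  "finite_partition N P \<longleftrightarrow> finite P \<and> P \<subseteq> sets N \<and> disjoint P \<and> \<Union>P = space N"

lemma pjoin_eq_image: "pjoin A B = (\<lambda>(a, b). a \<inter> b) ` (A \<times> B) - {{}}"
  unfolding pjoin_def by auto

lemma empty_notin_pjoin: "{} \<notin> pjoin A B"
  unfolding pjoin_def by blast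

lemma pjoin_Diff_empty_left: "pjoin (A - {{}}) B = pjoin A B"
  unfolding pjoin_def by blast

lemma pjoin_Diff_empty_right: "pjoin A (B - {{}}) = pjoin A B"
  unfolding pjoin_def by blast

lemma pjoin_assoc: "pjoin (pjoin A B) C = pjoin A (pjoin B C)"
proof (intro set_eqI iffI)
  fix x assume "x \<in> pjoin (pjoin A B) C"
  then obtain a b c where "a \<in> A" "b \<in> B" "c \<in> C" "x = a \<inter> (b \<inter> c)" "x \<noteq> {}"
    unfolding pjoin_def by (auto simp: Int_assoc)
  then show "x \<in> pjoin A (pjoin B C)" unfolding pjoin_def by blast
next
  fix x assume "x \<in> pjoin A (pjoin B C)"
  then obtain a b c where "a \<in> A" "b \<in> B" "c \<in> C" "x = (a \<inter> b) \<inter> c" "x \<noteq> {}"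
    unfolding pjoin_def by (auto simp: Int_assoc)
  then show "x \<in> pjoin (pjoin A B) C" unfolding pjoin_def by blast
qed

lemma ppre_eq_image: "ppre N R A = (\<lambda>p. R -` p \<inter> space N) ` A"
  unfolding ppre_def by auto

lemma ppre_pjoin: "ppre N R (pjoin A B) - {{}} = pjoin (ppre N R A) (ppre N R B)"
proof (intro set_eqI iffI)
  fix x assume "x \<in> ppre N R (pjoin A B) - {{}}"
  then obtain a b where "a \<in> A" "b \<in> B" "x = (R -` a \<inter> space N) \<inter> (R -` b \<inter> space N)" "x \<noteq> {}"
    unfolding ppre_def pjoin_def by auto
  then show "x \<in> pjoin (ppre N R A) (ppre N R B)" unfolding ppre_def pjoin_def by blast
next
  fix x assume "x \<in> pjoin (ppre N R A) (ppre N R B)"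
  then obtain a b where "a \<in> A" "b \<in> B" "x = R -` (a \<inter> b) \<inter> space N" "x \<noteq> {}"
    unfolding ppre_def pjoin_def by auto
  then show "x \<in> ppre N R (pjoin A B) - {{}}" unfolding ppre_def pjoin_def by blast
qed

lemma ppre_ppre:
  assumes "Q \<in> space N \<rightarrow> space N"
  shows "ppre N Q (ppre N R A) = ppre N (R \<circ> Q) A"
  using assms unfolding ppre_eq_image image_image by (intro image_cong) auto

lemma ppre_singleton_space:
  assumes "Q \<in> space N \<rightarrow> space N"
  shows "ppre N Q {space N} = {space N}"
  using assms unfolding ppre_def by auto

lemma pjoin_singleton_space:
  assumes "finite_partition N A" and "{} \<notin> A"
  shows "pjoin A {space N} = A"
proof -
  have "a \<inter> space N = a" if "a \<in> A" for a
    using assms(1) that unfolding finite_partition_def by blast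
  then show ?thesis using assms(2) unfolding pjoin_def by force
qed

lemma finite_partition_singleton_space: "finite_partition N {space N}"
  unfolding finite_partition_def by auto

lemma finite_partition_pjoin:
  assumes A: "finite_partition N A" and B: "finite_partition N B"
  shows "finite_partition N (pjoin A B)"
  unfolding finite_partition_def
proof (intro conjI)
  show "finite (pjoin A B)" using A B unfolding pjoin_eq_image finite_partition_def by simp
  show "pjoin A B \<subseteq> sets N"
    using A B unfolding pjoin_def finite_partition_def by (auto intro: sets.Int)
  show "disjoint (pjoin A B)"
  proof (rule disjointI)
    fix x y assume x: "x \<in> pjoin A B" and y: "y \<in> pjoin A B" and "x \<noteq> y"
    obtain a b where ab: "a \<in> A" "b \<in> B" "x = a \<inter> b" using x unfolding pjoin_def by auto
    obtain a' b' where ab': "a' \<in> A" "b' \<in> B" "y = a' \<inter> b'" using y unfolding pjoin_def by auto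
    have "a \<noteq> a' \<or> b \<noteq> b'" using ab ab' \<open>x \<noteq> y\<close> by auto
    then have "a \<inter> a' = {} \<or> b \<inter> b' = {}"
      using A B ab ab' unfolding finite_partition_def by (meson disjointD)
    then show "x \<inter> y = {}" using ab ab' by auto
  qed
  show "\<Union>(pjoin A B) = space N"
  proof (intro equalityI subsetI)
    fix x assume "x \<in> \<Union>(pjoin A B)"
    then obtain a b where "a \<in> A" "x \<in> a" unfolding pjoin_def by auto
    then show "x \<in> space N" using A unfolding finite_partition_def by auto
  next
    fix x assume "x \<in> space N"
    then obtain a b where "a \<in> A" "b \<in> B" "x \<in> a \<inter> b"
      using A B unfolding finite_partition_def by blast
    then show "x \<in> \<Union>(pjoin A B)" unfolding pjoin_def by auto
  qed
qed

lemma finite_partition_ppre: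
  assumes R: "R \<in> N \<rightarrow>\<^sub>M N" and A: "finite_partition N A"
  shows "finite_partition N (ppre N R A)"
  unfolding finite_partition_def
proof (intro conjI)
  show "finite (ppre N R A)" using A unfolding ppre_eq_image finite_partition_def by simp
  show "ppre N R A \<subseteq> sets N"
    using A measurable_sets[OF R] unfolding ppre_eq_image finite_partition_def by auto
  show "disjoint (ppre N R A)"
  proof (rule disjointI)
    fix x y assume x: "x \<in> ppre N R A" and y: "y \<in> ppre N R A" and "x \<noteq> y"
    obtain a where a: "a \<in> A" "x = R -` a \<inter> space N" using x unfolding ppre_def by auto
    obtain b where b: "b \<in> A" "y = R -` b \<inter> space N" using y unfolding ppre_def by auto
    have "a \<inter> b = {}" using A a b \<open>x \<noteq> y\<close> unfolding finite_partition_def by (metis disjointD)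
    then show "x \<inter> y = {}" using a b by auto
  qed
  show "\<Union>(ppre N R A) = space N"
  proof (intro equalityI subsetI)
    fix x assume x: "x \<in> space N"
    then obtain a where "a \<in> A" "R x \<in> a"
      using A measurable_space[OF R x] unfolding finite_partition_def by auto
    then show "x \<in> \<Union>(ppre N R A)" using x unfolding ppre_eq_image by auto
  qed (auto simp: ppre_eq_image)
qed

lemma part_entropy_Diff_empty:
  assumes "finite P"
  shows "part_entropy N (P - {{}}) = part_entropy N P"
  using assms unfolding part_entropy_def by (cases "{} \<in> P") (auto simp: sum_diff1)

lemma part_entropy_image:
  assumes "finite A" and "disjoint_family_on f A"
  shows "part_entropy N (f ` A) = (\<Sum>a\<in>A. entropy_term (measure N (f a)))"
  unfolding part_entropy_eq_sum_entropy_term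
proof (subst sum.reindex_nontrivial[OF assms(1)])
  fix a b assume "a \<in> A" "b \<in> A" "a \<noteq> b" "f a = f b"
  then have "f a = {}" using assms(2) unfolding disjoint_family_on_def by auto
  then show "entropy_term (measure N (f a)) = 0" by (simp add: entropy_term_def)
qed (simp add: o_def)

lemma finite_partition_sum_measure:
  assumes N: "finite_measure N" and P: "finite_partition N P" and X: "X \<in> sets N"
  shows "(\<Sum>p\<in>P. measure N (X \<inter> p)) = measure N X"
proof -
  have "(\<Union>p\<in>P. X \<inter> p) = X"
    using P sets.sets_into_space[OF X] unfolding finite_partition_def by blast
  moreover have "disjoint_family_on (\<lambda>p. X \<inter> p) P"
    using P unfolding finite_partition_def disjoint_family_on_def disjoint_def by blast
  then have "measure N (\<Union>p\<in>P. X \<inter> p) = (\<Sum>p\<in>P. measure N (X \<inter> p))"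
    using P X unfolding finite_partition_def
    by (intro finite_measure.finite_measure_finite_Union[OF N]) auto
  ultimately show ?thesis by simp
qed

lemma finite_partition_sum_measure_space:
  assumes N: "finite_measure N" and P: "finite_partition N P"
  shows "(\<Sum>p\<in>P. measure N p) = measure N (space N)"
proof -
  have "space N \<inter> p = p" if "p \<in> P" for p
    using P that sets.sets_into_space unfolding finite_partition_def by blast
  then show ?thesis using finite_partition_sum_measure[OF N P sets.top] by simp
qed

lemma part_entropy_pjoin_le:
  assumes N: "finite_measure N" and A: "finite_partition N A" and B: "finite_partition N B"
  shows "part_entropy N (pjoin A B)
           \<le> part_entropy N A + part_entropy N B + measure N (space N) * ln (measure N (space N))"
proof -
  have fin: "finite A" "finite B" using A B unfolding finite_partition_def by auto
  have "disjoint_family_on (\<lambda>(a, b). a \<inter> b) (A \<times> B)"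
    using A B unfolding finite_partition_def disjoint_family_on_def by (auto dest: disjointD)
  then have "part_entropy N (pjoin A B) = (\<Sum>(a, b)\<in>A \<times> B. entropy_term (measure N (a \<inter> b)))"
    using fin unfolding pjoin_eq_image
    by (simp add: part_entropy_Diff_empty part_entropy_image case_prod_unfold)
  also have "\<dots> = (\<Sum>a\<in>A. \<Sum>b\<in>B. entropy_term (measure N (a \<inter> b)))"
    by (simp add: sum.cartesian_product)
  also have "\<dots> \<le> part_entropy N A + part_entropy N B + measure N (space N) * ln (measure N (space N))"
    unfolding part_entropy_eq_sum_entropy_term
  proof (rule entropy_term_joint_le[OF fin])
    show "(\<Sum>b\<in>B. measure N (a \<inter> b)) = measure N a" if "a \<in> A" for a
      using finite_partition_sum_measure[OF N B, of a] that A unfolding finite_partition_def by auto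
    show "(\<Sum>a\<in>A. measure N (a \<inter> b)) = measure N b" if "b \<in> B" for b
      using finite_partition_sum_measure[OF N A, of b] that B
      unfolding finite_partition_def by (auto simp: Int_commute)
  qed (auto simp: finite_partition_sum_measure_space[OF N A])
  finally show ?thesis .
qed

lemma part_entropy_ge:
  assumes N: "finite_measure N" and P: "finite_partition N P"
  shows "- (measure N (space N) * ln (measure N (space N))) \<le> part_entropy N P"
proof -
  let ?c = "measure N (space N)"
  have "(\<Sum>p\<in>P. measure N p * ln (1 / ?c)) \<le> (\<Sum>p\<in>P. entropy_term (measure N p))"
  proof (rule sum_mono)
    fix p
    show "measure N p * ln (1 / ?c) \<le> entropy_term (measure N p)"
    proof (cases "measure N p = 0")
      case False
      then have "0 < measure N p" by (simp add: zero_less_measure_iff)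
      moreover have "measure N p \<le> ?c" by (rule finite_measure.bounded_measure[OF N])
      ultimately show ?thesis unfolding entropy_term_def by (intro mult_left_mono) (auto simp: ln_div)
    qed (simp add: entropy_term_def)
  qed
  also have "(\<Sum>p\<in>P. measure N p * ln (1 / ?c)) = ?c * ln (1 / ?c)"
    by (simp add: sum_distrib_right[symmetric] finite_partition_sum_measure_space[OF N P])
  also have "\<dots> = - (?c * ln ?c)"
    using measure_nonneg[of N "space N"] by (cases "?c = 0") (simp_all add: ln_div)
  finally show ?thesis unfolding part_entropy_eq_sum_entropy_term .
qed

section \<open>Iterates and dynamical joins\<close>

lemma invariant_measure_maps_space: "invariant_measure N R \<Longrightarrow> R \<in> space N \<rightarrow> space N"
  unfolding invariant_measure_def by (auto dest: measurable_space)

lemma measurable_funpow: "R \<in> N \<rightarrow>\<^sub>M N \<Longrightarrow> R ^^ n \<in> N \<rightarrow>\<^sub>M N"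
  by (induction n) (auto simp: funpow_Suc_right intro: measurable_comp)

lemma invariant_measure_funpow:
  assumes R: "invariant_measure N R"
  shows "invariant_measure N (R ^^ n)"
proof (induction n)
  case 0
  show ?case unfolding invariant_measure_def by (simp add: sets.sets_into_space Int_absorb2)
next
  case (Suc n)
  have meas: "R ^^ Suc n \<in> N \<rightarrow>\<^sub>M N"
    using R unfolding invariant_measure_def by (blast intro: measurable_funpow)
  have "emeasure N ((R ^^ Suc n) -` A \<inter> space N) = emeasure N A" if A: "A \<in> sets N" for A
  proof -
    have "(R ^^ Suc n) -` A \<inter> space N = R -` ((R ^^ n) -` A \<inter> space N) \<inter> space N"
      using invariant_measure_maps_space[OF R] unfolding funpow_Suc_right by auto
    then have "emeasure N ((R ^^ Suc n) -` A \<inter> space N)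
        = emeasure N (R -` ((R ^^ n) -` A \<inter> space N) \<inter> space N)"
      by (simp only:)
    also have "\<dots> = emeasure N ((R ^^ n) -` A \<inter> space N)"
      using R Suc A measurable_sets unfolding invariant_measure_def by blast
    also have "\<dots> = emeasure N A" using Suc A unfolding invariant_measure_def by blast
    finally show ?thesis .
  qed
  with meas show ?case unfolding invariant_measure_def by blast
qed

lemma part_entropy_ppre:
  assumes R: "invariant_measure N R" and A: "finite_partition N A"
  shows "part_entropy N (ppre N R A) = part_entropy N A"
proof -
  have "disjoint_family_on (\<lambda>p. R -` p \<inter> space N) A"
    using A unfolding finite_partition_def disjoint_family_on_def by (auto dest: disjointD)
  then have "part_entropy N (ppre N R A) = (\<Sum>p\<in>A. entropy_term (measure N (R -` p \<inter> space N)))"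
    using A unfolding ppre_eq_image finite_partition_def by (simp add: part_entropy_image)
  also have "\<dots> = (\<Sum>p\<in>A. entropy_term (measure N p))"
    using A R unfolding finite_partition_def invariant_measure_def
    by (intro sum.cong) (auto simp: measure_def)
  finally show ?thesis unfolding part_entropy_eq_sum_entropy_term .
qed

lemma finite_partition_dyn_join:
  assumes "R \<in> N \<rightarrow>\<^sub>M N" and "finite_partition N P"
  shows "finite_partition N (dyn_join N R P n)"
  by (induction n) (simp_all add: assms finite_partition_singleton_space finite_partition_pjoin
      finite_partition_ppre measurable_funpow)

lemma empty_notin_dyn_join: "space N \<noteq> {} \<Longrightarrow> {} \<notin> dyn_join N R P n"
  by (cases n) (simp_all add: empty_notin_pjoin)

lemma dyn_join_add:
  assumes R: "R \<in> N \<rightarrow>\<^sub>M N" and P: "finite_partition N P" and ne: "space N \<noteq> {}"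
  shows "dyn_join N R P (n + m) = pjoin (dyn_join N R P n) (ppre N (R ^^ n) (dyn_join N R P m))"
proof (induction m)
  case 0
  have "R ^^ n \<in> space N \<rightarrow> space N" using measurable_space[OF measurable_funpow[OF R]] by blast
  then show ?case
    using pjoin_singleton_space[OF finite_partition_dyn_join[OF R P] empty_notin_dyn_join[OF ne]]
    by (simp add: ppre_singleton_space)
next
  case (Suc m)
  have "R ^^ n \<in> space N \<rightarrow> space N" using measurable_space[OF measurable_funpow[OF R]] by blast
  then have shift: "ppre N (R ^^ n) (ppre N (R ^^ m) P) = ppre N (R ^^ (n + m)) P"
    by (simp add: ppre_ppre funpow_add add.commute)
  have "dyn_join N R P (n + Suc m) = pjoin (dyn_join N R P (n + m)) (ppre N (R ^^ (n + m)) P)"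
    by simp
  also have "\<dots> = pjoin (dyn_join N R P n)
      (pjoin (ppre N (R ^^ n) (dyn_join N R P m)) (ppre N (R ^^ (n + m)) P))"
    by (simp only: Suc pjoin_assoc)
  also have "\<dots> = pjoin (dyn_join N R P n) (ppre N (R ^^ n) (dyn_join N R P (Suc m)) - {{}})"
    by (simp only: dyn_join.simps ppre_pjoin shift)
  also have "\<dots> = pjoin (dyn_join N R P n) (ppre N (R ^^ n) (dyn_join N R P (Suc m)))"
    by (rule pjoin_Diff_empty_right)
  finally show ?case .
qed

lemma part_entropy_dyn_join_add_le:
  assumes N: "finite_measure N" and R: "invariant_measure N R" and P: "finite_partition N P"
  shows "part_entropy N (dyn_join N R P (n + m))
           \<le> part_entropy N (dyn_join N R P n) + part_entropy N (dyn_join N R P m)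
             + measure N (space N) * ln (measure N (space N))"
proof (cases "space N = {}")
  case True
  have empty: "p = {}" if "p \<in> dyn_join N R P l" for p l
    using True that finite_partition_dyn_join[of R N P l] R P
    unfolding finite_partition_def invariant_measure_def by auto
  have "part_entropy N (dyn_join N R P l) = 0" for l
    unfolding part_entropy_def by (metis empty measure_empty mult_zero_left sum.neutral)
  with True show ?thesis by simp
next
  case False
  have Rn: "invariant_measure N (R ^^ n)" by (rule invariant_measure_funpow[OF R])
  have RM: "R \<in> N \<rightarrow>\<^sub>M N" and RnM: "R ^^ n \<in> N \<rightarrow>\<^sub>M N"
    using R Rn unfolding invariant_measure_def by auto
  have "part_entropy N (dyn_join N R P (n + m))
      \<le> part_entropy N (dyn_join N R P n) + part_entropy N (ppre N (R ^^ n) (dyn_join N R P m))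
        + measure N (space N) * ln (measure N (space N))"
    unfolding dyn_join_add[OF RM P False]
    by (intro part_entropy_pjoin_le N finite_partition_dyn_join finite_partition_ppre RM RnM P)
  also have "part_entropy N (ppre N (R ^^ n) (dyn_join N R P m)) = part_entropy N (dyn_join N R P m)"
    by (intro part_entropy_ppre Rn finite_partition_dyn_join RM P)
  finally show ?thesis .
qed

lemma convergent_part_entropy_dyn_join:
  assumes N: "finite_measure N" and R: "invariant_measure N R" and P: "finite_partition N P"
  shows "convergent (\<lambda>n. part_entropy N (dyn_join N R P n) / real n)"
proof -
  define c where "c = measure N (space N) * ln (measure N (space N))"
  define b where "b n = part_entropy N (dyn_join N R P n) + \<bar>c\<bar>" for n
  have "convergent (\<lambda>n. b n / real n)"
  proof (rule fekete_convergent)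
    show "b (n + m) \<le> b n + b m" for n m
      using part_entropy_dyn_join_add_le[OF N R P, of n m] unfolding b_def c_def by linarith
    show "- c + \<bar>c\<bar> \<le> b n" for n
      using part_entropy_ge[OF N finite_partition_dyn_join, of R P n] R P
      unfolding b_def c_def invariant_measure_def by simp
  qed
  then obtain L where "(\<lambda>n. b n / real n) \<longlonglongrightarrow> L" unfolding convergent_def by blast
  then have "(\<lambda>n. b n / real n - \<bar>c\<bar> / real n) \<longlonglongrightarrow> L - 0"
    by (intro tendsto_diff lim_const_over_n)
  then have "convergent (\<lambda>n. b n / real n - \<bar>c\<bar> / real n)"
    unfolding convergent_def by blast
  then show ?thesis unfolding b_def by (simp add: diff_divide_distrib[symmetric])
qed

section \<open>Restriction to a forward-invariant set\<close>

lemma image_Int_pjoin: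
  "(\<lambda>a. X \<inter> a) ` pjoin A B - {{}} = pjoin ((\<lambda>a. X \<inter> a) ` A) ((\<lambda>a. X \<inter> a) ` B)"
proof (intro set_eqI iffI)
  fix x assume "x \<in> (\<lambda>a. X \<inter> a) ` pjoin A B - {{}}"
  then obtain a b where "a \<in> A" "b \<in> B" "x = (X \<inter> a) \<inter> (X \<inter> b)" "x \<noteq> {}"
    unfolding pjoin_def by auto
  then show "x \<in> pjoin ((\<lambda>a. X \<inter> a) ` A) ((\<lambda>a. X \<inter> a) ` B)" unfolding pjoin_def by blast
next
  fix x assume "x \<in> pjoin ((\<lambda>a. X \<inter> a) ` A) ((\<lambda>a. X \<inter> a) ` B)"
  then obtain a b where "a \<in> A" "b \<in> B" "x = X \<inter> (a \<inter> b)" "x \<noteq> {}"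
    unfolding pjoin_def by auto
  then show "x \<in> (\<lambda>a. X \<inter> a) ` pjoin A B - {{}}" unfolding pjoin_def by blast
qed

lemma preimage_Diff_null_set:
  assumes N: "finite_measure N" and R: "invariant_measure N R"
    and X: "X \<in> sets N" and RX: "R ` X \<subseteq> X"
  shows "R -` X \<inter> space N - X \<in> null_sets N"
proof -
  have pre: "R -` X \<inter> space N \<in> sets N"
    using R X unfolding invariant_measure_def by (auto intro: measurable_sets)
  have "X \<subseteq> R -` X \<inter> space N" using RX sets.sets_into_space[OF X] by auto
  then have "measure N (R -` X \<inter> space N - X) = measure N (R -` X \<inter> space N) - measure N X"
    by (rule finite_measure.finite_measure_Diff[OF N pre X])
  also have "\<dots> = 0" using R X unfolding invariant_measure_def by (simp add: measure_def)
  finally show ?thesis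
    using pre X by (simp add: null_sets_def finite_measure.emeasure_eq_measure[OF N] sets.Diff)
qed

lemma invariant_measure_restrict_space:
  assumes N: "finite_measure N" and R: "invariant_measure N R"
    and X: "X \<in> sets N" and RX: "R ` X \<subseteq> X"
  shows "invariant_measure (restrict_space N X) R"
  unfolding invariant_measure_def
proof (intro conjI ballI)
  have RM: "R \<in> N \<rightarrow>\<^sub>M N" using R unfolding invariant_measure_def by blast
  then show "R \<in> restrict_space N X \<rightarrow>\<^sub>M restrict_space N X"
    using RX by (intro measurable_restrict_space3) auto
  have X': "X \<inter> space N \<in> sets N" using X by simp
  fix A assume "A \<in> sets (restrict_space N X)"
  then have A: "A \<subseteq> X" "A \<in> sets N" using sets_restrict_space_iff[OF X'] by auto
  have pre: "R -` A \<inter> space N \<in> sets N" using measurable_sets[OF RM A(2)] .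
  have "emeasure (restrict_space N X) (R -` A \<inter> space (restrict_space N X))
      = emeasure N (R -` A \<inter> X)"
    using X X' by (simp add: emeasure_restrict_space)
  also have "R -` A \<inter> X = (R -` A \<inter> space N) - (R -` X \<inter> space N - X)"
    using A(1) sets.sets_into_space[OF X] by auto
  also have "emeasure N \<dots> = emeasure N (R -` A \<inter> space N)"
    by (rule emeasure_Diff_null_set[OF preimage_Diff_null_set[OF N R X RX] pre])
  also have "\<dots> = emeasure (restrict_space N X) A"
    using R A X' unfolding invariant_measure_def by (simp add: emeasure_restrict_space)
  finally show "emeasure (restrict_space N X) (R -` A \<inter> space (restrict_space N X))
      = emeasure (restrict_space N X) A" .
qed

lemma finite_partition_restrict_space:
  assumes P: "finite_partition N P" and X: "X \<in> sets N"
  shows "finite_partition (restrict_space N X) ((\<lambda>p. X \<inter> p) ` P)"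
  unfolding finite_partition_def
proof (intro conjI)
  show "disjoint ((\<lambda>p. X \<inter> p) ` P)"
    using P unfolding finite_partition_def by (intro disjoint_image_subset) auto
  show "(\<lambda>p. X \<inter> p) ` P \<subseteq> sets (restrict_space N X)"
    using P X unfolding finite_partition_def by (auto simp: sets_restrict_space_iff)
qed (use P X in \<open>auto simp: finite_partition_def\<close>)

lemma ppre_restrict_space:
  assumes X: "X \<in> sets N" and RX: "R ` X \<subseteq> X"
  shows "ppre (restrict_space N X) R ((\<lambda>p. X \<inter> p) ` P) = (\<lambda>a. X \<inter> a) ` ppre N R P"
proof -
  have "R -` (X \<inter> p) \<inter> X = X \<inter> (R -` p \<inter> space N)" for p
    using RX sets.sets_into_space[OF X] by auto
  then show ?thesis using X unfolding ppre_eq_image image_image by simp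
qed

lemma funpow_image_subset: "R ` X \<subseteq> X \<Longrightarrow> (R ^^ n) ` X \<subseteq> X"
  by (induction n) auto

lemma dyn_join_restrict_space:
  assumes X: "X \<in> sets N" and RX: "R ` X \<subseteq> X"
  shows "dyn_join (restrict_space N X) R ((\<lambda>p. X \<inter> p) ` P) n - {{}}
           = (\<lambda>a. X \<inter> a) ` dyn_join N R P n - {{}}"
proof (induction n)
  case 0
  show ?case using X sets.sets_into_space[OF X] by (auto simp: Int_absorb2)
next
  case (Suc n)
  have "dyn_join (restrict_space N X) R ((\<lambda>p. X \<inter> p) ` P) (Suc n) - {{}}
      = pjoin (dyn_join (restrict_space N X) R ((\<lambda>p. X \<inter> p) ` P) n - {{}})
          ((\<lambda>a. X \<inter> a) ` ppre N (R ^^ n) P - {{}})"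
    using ppre_restrict_space[OF X funpow_image_subset[OF RX]]
    by (simp add: empty_notin_pjoin pjoin_Diff_empty_left pjoin_Diff_empty_right)
  also have "\<dots> = (\<lambda>a. X \<inter> a) ` dyn_join N R P (Suc n) - {{}}"
    unfolding Suc by (simp add: image_Int_pjoin pjoin_Diff_empty_left pjoin_Diff_empty_right)
  finally show ?case .
qed

lemma dyn_join_cell_disjoint_or_superset:
  assumes cells: "\<And>p. p \<in> P \<Longrightarrow> p \<subseteq> X \<or> space N - X \<subseteq> p"
    and a: "a \<in> dyn_join N R P n"
  defines "E \<equiv> {x. \<forall>i. (R ^^ i) x \<in> space N - X}"
  shows "a \<inter> E = {} \<or> E \<subseteq> a"
  using a
proof (induction n arbitrary: a)
  case 0
  then show ?case unfolding E_def by (auto dest: spec[of _ 0])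
next
  case (Suc n)
  have "a \<in> pjoin (dyn_join N R P n) (ppre N (R ^^ n) P)" using Suc.prems by simp
  then obtain u p where a: "a = u \<inter> ((R ^^ n) -` p \<inter> space N)" "u \<in> dyn_join N R P n" "p \<in> P"
    unfolding pjoin_def ppre_def by blast
  have "(R ^^ n) -` p \<inter> space N \<inter> E = {} \<or> E \<subseteq> (R ^^ n) -` p \<inter> space N"
    using cells[OF a(3)] unfolding E_def by (auto dest: spec[of _ n] spec[of _ 0])
  with Suc.IH[OF a(2)] show ?case unfolding a(1) by blast
qed

lemma Diff_null_set_if_orbits_enter:
  assumes N: "finite_measure N" and R: "invariant_measure N R"
    and X: "X \<in> sets N" and RX: "R ` X \<subseteq> X"
    and a: "a \<in> sets N" and enter: "\<And>x. x \<in> a \<Longrightarrow> \<exists>i. (R ^^ i) x \<in> X"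
  shows "a - X \<in> null_sets N"
proof (rule null_sets_subset)
  have "(R ^^ i) -` X \<inter> space N - X \<in> null_sets N" for i
    using preimage_Diff_null_set[OF N invariant_measure_funpow[OF R] X funpow_image_subset[OF RX]] .
  then show "(\<Union>i. (R ^^ i) -` X \<inter> space N - X) \<in> null_sets N" by (rule null_sets_UN)
  show "a - X \<subseteq> (\<Union>i. (R ^^ i) -` X \<inter> space N - X)"
  proof
    fix x assume x: "x \<in> a - X"
    then obtain i where "(R ^^ i) x \<in> X" using enter by blast
    with x sets.sets_into_space[OF a] show "x \<in> (\<Union>i. (R ^^ i) -` X \<inter> space N - X)" by auto
  qed
qed (use a X in auto)

lemma part_entropy_dyn_join_restrict_space:
  assumes R: "R \<in> N \<rightarrow>\<^sub>M N" and P: "finite_partition N P"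
    and X: "X \<in> sets N" and RX: "R ` X \<subseteq> X"
  shows "part_entropy (restrict_space N X) (dyn_join (restrict_space N X) R ((\<lambda>p. X \<inter> p) ` P) n)
           = (\<Sum>a\<in>dyn_join N R P n. entropy_term (measure N (X \<inter> a)))"
proof -
  let ?NX = "restrict_space N X" and ?D = "dyn_join N R P n"
  have "R \<in> ?NX \<rightarrow>\<^sub>M ?NX" using R RX by (intro measurable_restrict_space3) auto
  then have "finite_partition ?NX (dyn_join ?NX R ((\<lambda>p. X \<inter> p) ` P) n)"
    using finite_partition_restrict_space[OF P X] by (rule finite_partition_dyn_join)
  then have "finite (dyn_join ?NX R ((\<lambda>p. X \<inter> p) ` P) n)"
    unfolding finite_partition_def by blast
  then have "part_entropy ?NX (dyn_join ?NX R ((\<lambda>p. X \<inter> p) ` P) n)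
      = part_entropy ?NX ((\<lambda>a. X \<inter> a) ` ?D - {{}})"
    by (simp flip: dyn_join_restrict_space[OF X RX] add: part_entropy_Diff_empty)
  also have D: "finite ?D" "disjoint ?D"
    using finite_partition_dyn_join[OF R P] unfolding finite_partition_def by auto
  then have "part_entropy ?NX ((\<lambda>a. X \<inter> a) ` ?D - {{}}) = part_entropy ?NX ((\<lambda>a. X \<inter> a) ` ?D)"
    by (simp add: part_entropy_Diff_empty)
  also have "disjoint_family_on (\<lambda>a. X \<inter> a) ?D"
    using D(2) unfolding disjoint_family_on_def by (auto dest: disjointD)
  then have "part_entropy ?NX ((\<lambda>a. X \<inter> a) ` ?D) = (\<Sum>a\<in>?D. entropy_term (measure ?NX (X \<inter> a)))"
    by (rule part_entropy_image[OF D(1)])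
  also have "\<dots> = (\<Sum>a\<in>?D. entropy_term (measure N (X \<inter> a)))"
    using X by (simp add: measure_restrict_space)
  finally show ?thesis .
qed

lemma dyn_join_cell_unique_positive_Diff:
  assumes N: "finite_measure N" and R: "invariant_measure N R"
    and X: "X \<in> sets N" and RX: "R ` X \<subseteq> X" and P: "finite_partition N P"
    and cells: "\<And>p. p \<in> P \<Longrightarrow> p \<subseteq> X \<or> space N - X \<subseteq> p"
    and a: "a \<in> dyn_join N R P n" "measure N (a - X) \<noteq> 0"
    and b: "b \<in> dyn_join N R P n" "measure N (b - X) \<noteq> 0"
  shows "a = b"
proof -
  let ?D = "dyn_join N R P n"
  define E where "E = {x. \<forall>i. (R ^^ i) x \<in> space N - X}"
  have RM: "R \<in> N \<rightarrow>\<^sub>M N" using R unfolding invariant_measure_def by blast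
  have D: "?D \<subseteq> sets N" "disjoint ?D"
    using finite_partition_dyn_join[OF RM P] unfolding finite_partition_def by auto
  have E_sub: "E \<subseteq> c \<and> E \<noteq> {}" if c: "c \<in> ?D" "measure N (c - X) \<noteq> 0" for c
  proof -
    have "c \<inter> E \<noteq> {}"
    proof
      assume "c \<inter> E = {}"
      have "\<exists>i. (R ^^ i) x \<in> X" if x: "x \<in> c" for x
      proof -
        have "x \<in> space N" using x c(1) D(1) sets.sets_into_space by blast
        moreover obtain i where "(R ^^ i) x \<notin> space N - X"
          using x \<open>c \<inter> E = {}\<close> unfolding E_def by blast
        ultimately show ?thesis using measurable_space[OF measurable_funpow[OF RM], of x i] by blast
      qed
      then have "c - X \<in> null_sets N"
        using Diff_null_set_if_orbits_enter[OF N R X RX] D(1) c(1) by blast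
      with c(2) show False by (simp add: measure_def null_setsD1)
    qed
    with dyn_join_cell_disjoint_or_superset[OF cells c(1), folded E_def] show ?thesis by blast
  qed
  show "a = b"
  proof (rule ccontr)
    assume "a \<noteq> b"
    with D(2) a(1) b(1) have "a \<inter> b = {}" by (rule disjointD)
    moreover have "E \<subseteq> a" "E \<subseteq> b" "E \<noteq> {}" using E_sub a b by blast+
    ultimately show False by blast
  qed
qed

lemma part_entropy_dyn_join_le_restrict_space:
  assumes N: "finite_measure N" and R: "invariant_measure N R"
    and X: "X \<in> sets N" and RX: "R ` X \<subseteq> X" and P: "finite_partition N P"
    and cells: "\<And>p. p \<in> P \<Longrightarrow> p \<subseteq> X \<or> space N - X \<subseteq> p"
  shows "part_entropy N (dyn_join N R P n)
           \<le> part_entropy (restrict_space N X) (dyn_join (restrict_space N X) R ((\<lambda>p. X \<inter> p) ` P) n) + 1"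
proof -
  let ?D = "dyn_join N R P n"
  have RM: "R \<in> N \<rightarrow>\<^sub>M N" using R unfolding invariant_measure_def by blast
  have D: "finite ?D" "?D \<subseteq> sets N"
    using finite_partition_dyn_join[OF RM P] unfolding finite_partition_def by auto
  have "measure N a = measure N (X \<inter> a) + measure N (a - X)" if "a \<in> ?D" for a
    using D(2) that X finite_measure.finite_measure_Diff'[OF N, of a X] by (auto simp: Int_commute)
  then have "part_entropy N ?D \<le> (\<Sum>a\<in>?D. entropy_term (measure N (X \<inter> a)))
      + (\<Sum>a\<in>?D. entropy_term (measure N (a - X)))"
    unfolding part_entropy_eq_sum_entropy_term sum.distrib[symmetric]
    by (intro sum_mono) (simp add: entropy_term_add_le)
  also have "(\<Sum>a\<in>?D. entropy_term (measure N (a - X))) \<le> 1"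
    using dyn_join_cell_unique_positive_Diff[OF N R X RX P cells]
    by (intro sum_entropy_term_le_one[OF D(1)]) auto
  finally show ?thesis
    by (simp add: part_entropy_dyn_join_restrict_space[OF RM P X RX])
qed

lemma ks_entropy_le_restrict_space:
  assumes N: "finite_measure N" and R: "invariant_measure N R"
    and X: "X \<in> sets N" and RX: "R ` X \<subseteq> X" and P: "finite_partition N P"
    and cells: "\<And>p. p \<in> P \<Longrightarrow> p \<subseteq> X \<or> space N - X \<subseteq> p"
  shows "ks_entropy N R P \<le> ks_entropy (restrict_space N X) R ((\<lambda>p. X \<inter> p) ` P)"
proof -
  let ?NX = "restrict_space N X" and ?C = "(\<lambda>p. X \<inter> p) ` P"
  let ?h = "\<lambda>n. part_entropy N (dyn_join N R P n) / real n"
    and ?g = "\<lambda>n. part_entropy ?NX (dyn_join ?NX R ?C n) / real n"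
  have "?h \<longlonglongrightarrow> lim ?h"
    using convergent_part_entropy_dyn_join[OF N R P] by (simp add: convergent_LIMSEQ_iff)
  moreover have "?g \<longlonglongrightarrow> lim ?g"
    using convergent_part_entropy_dyn_join[OF finite_measure_restrict_space[OF N X]
        invariant_measure_restrict_space[OF N R X RX] finite_partition_restrict_space[OF P X]]
    by (simp add: convergent_LIMSEQ_iff)
  then have "(\<lambda>n. ?g n + 1 / real n) \<longlonglongrightarrow> lim ?g + 0"
    by (intro tendsto_add lim_const_over_n)
  moreover have "?h n \<le> ?g n + 1 / real n" for n
    using part_entropy_dyn_join_le_restrict_space[OF N R X RX P cells, of n]
    by (simp add: divide_right_mono flip: add_divide_distrib)
  ultimately have "lim ?h \<le> lim ?g + 0" by (intro LIMSEQ_le) auto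
  then show ?thesis unfolding ks_entropy_def by simp
qed

theorem lemma2p10:
  fixes S :: "'a::topological_space \<Rightarrow> 'a"
    and X :: "'a set"
    and M :: "'a measure"
    and k :: nat
    and Zp :: "nat \<Rightarrow> 'a set"
  assumes S_cont: "continuous_on UNIV S"
    and X_borel: "X \<in> sets borel"
    and S_X: "S ` X \<subseteq> X"
    and M_borel: "sets M = sets borel"
    and M_finite: "finite_measure M"
    and M_inv: "invariant_measure M S"
    and Z_meas: "\<And>j. j \<le> k \<Longrightarrow> Zp j \<in> sets borel"
    and Z_disj: "disjoint_family_on Zp {..k}"
    and Z_cover: "(\<Union>j\<le>k. Zp j) = UNIV"
    and Z_sub: "\<And>j. 1 \<le> j \<Longrightarrow> j \<le> k \<Longrightarrow> Zp j \<subseteq> X"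
  shows "invariant_measure (restrict_space M X) S \<and>
         ks_entropy M S (Zp ` {..k})
           \<le> ks_entropy (restrict_space M X) S ((\<lambda>j. X \<inter> Zp j) ` {..k})"
proof
  have space: "space M = UNIV" using sets_eq_imp_space_eq[OF M_borel] by simp
  have X: "X \<in> sets M" using X_borel M_borel by simp
  show "invariant_measure (restrict_space M X) S"
    by (rule invariant_measure_restrict_space[OF M_finite M_inv X S_X])
  have partition: "finite_partition M (Zp ` {..k})"
    unfolding finite_partition_def space
    using Z_meas M_borel Z_cover disjoint_family_on_disjoint_image[OF Z_disj] by auto
  have cells: "p \<subseteq> X \<or> space M - X \<subseteq> p" if p: "p \<in> Zp ` {..k}" for p
  proof -
    obtain j where j: "j \<le> k" "p = Zp j" using p by blast
    show ?thesis
    proof (cases "j = 0")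
      case True
      have "x \<in> Zp 0" if x: "x \<notin> X" for x
      proof -
        obtain i where "i \<le> k" "x \<in> Zp i" using Z_cover by blast
        with x Z_sub[of i] show ?thesis by (cases "i = 0") auto
      qed
      with True j show ?thesis by (auto simp: space)
    qed (use Z_sub j in auto)
  qed
  show "ks_entropy M S (Zp ` {..k}) \<le> ks_entropy (restrict_space M X) S ((\<lambda>j. X \<inter> Zp j) ` {..k})"
    using ks_entropy_le_restrict_space[OF M_finite M_inv X S_X partition cells]
    by (simp add: image_image)
qed

end
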